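(* There exist absolute constants $c,C>0$ such that for every integer $k'\ge0$, all $\mu_1,\dots,\mu_{k'}\in\mathbb R$, and every even integer $t\ge0$, the polynomial $p(x)=(x-\mu_1)^2(x-\mu_2)^2\cdots(x-\mu_{k'})^2$ satisfies $$\frac{\mathbf E_{x\sim\mathcal N(0,1)}\big[x^{2t}p(x)^2\big]}{\big(\mathbf E_{x\sim\mathcal N(0,1)}[x^t p(x)]\big)^2}\ \ge\ 2^{\,ct - C(k'+1)} .$$ *)

theory Defs
  imports "HOL-Probability.Probability"
begin

end

theory Submission
  imports Defs "HOL-Computational_Algebra.Polynomial"
begin

text \<open>
  By Cauchy--Schwarz, any test function \<open>v\<close> with \<open>E[x^t p(x) v(x)] = E[x^t p(x)]\<close> gives
  \<open>E[x^t p]\<^sup>2 \<le> E[x^(2t) p\<^sup>2] \<cdot> E[v\<^sup>2]\<close>, so it suffices to find such a \<open>v\<close> with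
  \<open>E[v\<^sup>2] \<le> 2 powr (13 (D + 1) - t/8)\<close> for every \<open>p\<close> of degree \<open>D\<close>.
  Weighting the Gaussian by \<open>exp ((1 - 1/z\<^sup>2) x\<^sup>2 / 2)\<close> turns it into \<open>z\<close> times a Gaussian of
  standard deviation \<open>z\<close>, which multiplies the \<open>n\<close>-th moment by \<open>z^(n+1)\<close>. Hence
  \<open>v = \<Sum>\<^sub>l w\<^sub>l z\<^sub>l^-(t+1) exp ((1 - 1/z\<^sub>l\<^sup>2) x\<^sup>2 / 2)\<close>, with \<open>w\<^sub>l\<close> the Lagrange weights of the
  nodes \<open>z\<^sub>0, \<dots>, z\<^sub>D\<close> at the point 1, reproduces all moments of order \<open>t, \<dots>, t + D\<close>.
  Nodes equally spaced in \<open>[11/10, 6/5]\<close> keep the weights below \<open>24^D\<close>, make the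
  coefficients decay like \<open>(10/11)^t\<close>, and keep all the Gaussian exponents small enough
  that \<open>E[v\<^sup>2] \<le> 2 (\<Sum>\<^sub>l |coefficient|)\<^sup>2\<close>.
\<close>

lemma Cauchy_Schwarz_integral:
  fixes f g :: "'a \<Rightarrow> real"
  assumes "integrable M (\<lambda>x. (f x)\<^sup>2)" "integrable M (\<lambda>x. (g x)\<^sup>2)" "integrable M (\<lambda>x. f x * g x)"
  shows "(LINT x|M. f x * g x)\<^sup>2 \<le> (LINT x|M. (f x)\<^sup>2) * (LINT x|M. (g x)\<^sup>2)"
proof -
  define F A G where "F = (LINT x|M. (f x)\<^sup>2)" "A = (LINT x|M. f x * g x)" "G = (LINT x|M. (g x)\<^sup>2)"
  have quadratic: "0 \<le> F - 2 * s * A + s\<^sup>2 * G" for s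
  proof -
    have "0 \<le> (LINT x|M. (f x - s * g x)\<^sup>2)" by simp
    also have "\<dots> = (LINT x|M. (f x)\<^sup>2 - 2 * s * (f x * g x) + s\<^sup>2 * (g x)\<^sup>2)"
      by (simp add: power2_eq_square algebra_simps)
    also have "\<dots> = F - 2 * s * A + s\<^sup>2 * G"
      using assms by (simp add: F_A_G_def)
    finally show ?thesis .
  qed
  show ?thesis
  proof (cases "G = 0")
    case True
    have "A = 0"
      using quadratic[of "(F + 1) / (2 * A)"] True by (cases "A = 0") (simp_all add: field_simps)
    then show ?thesis using True by (simp add: F_A_G_def)
  next
    case False
    then have "G > 0" unfolding F_A_G_def by (simp add: order_le_neq_trans)
    have "0 \<le> F - 2 * (A / G) * A + (A / G)\<^sup>2 * G" by (rule quadratic)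
    then have "0 \<le> F * G - A\<^sup>2" using \<open>G > 0\<close> by (simp add: field_simps power2_eq_square)
    then show ?thesis by (simp add: F_A_G_def)
  qed
qed

lemma std_normal_moment_exp:
  fixes \<beta> :: real
  assumes "\<beta> < 1/2"
  shows "integrable std_normal_distribution (\<lambda>x. x^n * exp (\<beta> * x\<^sup>2))"
    and "(LINT x|std_normal_distribution. x^n * exp (\<beta> * x\<^sup>2)) =
         (1 / sqrt (1 - 2*\<beta>))^(n+1) * (LINT x|std_normal_distribution. x^n)"
proof -
  define \<sigma> where "\<sigma> = 1 / sqrt (1 - 2*\<beta>)"
  have "\<sigma> > 0" using assms by (simp add: \<sigma>_def)
  have \<sigma>_sq: "\<sigma>^2 * (1 - 2*\<beta>) = 1" using assms by (simp add: \<sigma>_def power_divide)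
  define f where "f x = std_normal_density x * (x^n * exp (\<beta> * x\<^sup>2))" for x :: real
  have f_scaled: "f (0 + \<sigma> * y) = \<sigma>^n * (std_normal_density y * y^n)" for y
  proof -
    have "- (\<sigma>*y)\<^sup>2 / 2 + \<beta> * (\<sigma>*y)\<^sup>2 = - (\<sigma>^2 * (1 - 2*\<beta>)) * y\<^sup>2 / 2"
      by (simp add: algebra_simps)
    then have "exp (- (\<sigma>*y)\<^sup>2 / 2) * exp (\<beta> * (\<sigma>*y)\<^sup>2) = exp (- y\<^sup>2 / 2)"
      by (simp add: \<sigma>_sq flip: exp_add)
    then show ?thesis unfolding f_def std_normal_density_def
      by (simp add: algebra_simps)
  qed
  have "integrable lborel (\<lambda>y. f (0 + \<sigma> * y))"
    unfolding f_scaled using integrable_std_normal_moment[of n] by simp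
  then have "integrable lborel f"
    using lborel_integrable_real_affine_iff[of \<sigma> f 0] \<open>\<sigma> > 0\<close> by simp
  then show "integrable std_normal_distribution (\<lambda>x. x^n * exp (\<beta> * x\<^sup>2))"
    unfolding f_def by (subst integrable_density) auto
  have "integral\<^sup>L lborel f = \<sigma>^(n+1) * integral\<^sup>L lborel (\<lambda>y. std_normal_density y * y^n)"
    using lborel_integral_real_affine[of \<sigma> f 0] \<open>\<sigma> > 0\<close> unfolding f_scaled by simp
  then show "(LINT x|std_normal_distribution. x^n * exp (\<beta> * x\<^sup>2)) =
         (1 / sqrt (1 - 2*\<beta>))^(n+1) * (LINT x|std_normal_distribution. x^n)"
    unfolding f_def \<sigma>_def by (simp add: integral_density)
qed

lemma std_normal_poly_moment_exp:
  fixes p :: "real poly" and \<beta> :: real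
  assumes "\<beta> < 1/2"
  shows "integrable std_normal_distribution (\<lambda>x. x^t * poly p x * exp (\<beta> * x\<^sup>2))"
    and "(LINT x|std_normal_distribution. x^t * poly p x * exp (\<beta> * x\<^sup>2)) =
         (\<Sum>i\<le>degree p. coeff p i * (1 / sqrt (1 - 2*\<beta>))^(t+i+1) *
                           (LINT x|std_normal_distribution. x^(t+i)))"
proof -
  have expand: "(\<lambda>x. x^t * poly p x * exp (\<beta> * x\<^sup>2)) =
      (\<lambda>x. \<Sum>i\<le>degree p. coeff p i * (x^(t+i) * exp (\<beta> * x\<^sup>2)))"
    by (simp add: poly_altdef sum_distrib_left sum_distrib_right power_add algebra_simps)
  show "integrable std_normal_distribution (\<lambda>x. x^t * poly p x * exp (\<beta> * x\<^sup>2))"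
    unfolding expand using std_normal_moment_exp(1)[OF assms] by auto
  show "(LINT x|std_normal_distribution. x^t * poly p x * exp (\<beta> * x\<^sup>2)) =
         (\<Sum>i\<le>degree p. coeff p i * (1 / sqrt (1 - 2*\<beta>))^(t+i+1) *
                           (LINT x|std_normal_distribution. x^(t+i)))"
    unfolding expand using std_normal_moment_exp[OF assms] by (simp add: mult.assoc)
qed

lemma integral_std_normal_exp_sum_square_le:
  fixes c \<beta> :: "'i \<Rightarrow> real"
  assumes "finite I" "\<And>l. l \<in> I \<Longrightarrow> \<beta> l \<le> 3/16"
  shows "integrable std_normal_distribution (\<lambda>x. (\<Sum>l\<in>I. c l * exp (\<beta> l * x\<^sup>2))\<^sup>2)"
    and "(LINT x|std_normal_distribution. (\<Sum>l\<in>I. c l * exp (\<beta> l * x\<^sup>2))\<^sup>2) \<le> 2 * (\<Sum>l\<in>I. \<bar>c l\<bar>)\<^sup>2"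
proof -
  define N where "N = std_normal_distribution"
  define \<gamma> where "\<gamma> l l' = \<beta> l + \<beta> l'" for l l'
  have \<gamma>_lt: "\<gamma> l l' < 1/2" and \<gamma>_scale: "1 / sqrt (1 - 2 * \<gamma> l l') \<le> 2"
    if "l \<in> I" "l' \<in> I" for l l'
  proof -
    have "1/4 \<le> 1 - 2 * \<gamma> l l'"
      using assms(2)[OF that(1)] assms(2)[OF that(2)] by (simp add: \<gamma>_def)
    then show "\<gamma> l l' < 1/2" by simp
    have "1/2 \<le> sqrt (1 - 2 * \<gamma> l l')"
      using real_sqrt_le_mono[OF \<open>1/4 \<le> _\<close>] by (simp add: real_sqrt_divide)
    then show "1 / sqrt (1 - 2 * \<gamma> l l') \<le> 2"
      using \<open>\<gamma> l l' < 1/2\<close> by (simp add: divide_le_eq mult.commute)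
  qed
  have exp_moment: "integrable N (\<lambda>x. exp (\<gamma> l l' * x\<^sup>2))"
      "(LINT x|N. exp (\<gamma> l l' * x\<^sup>2)) = 1 / sqrt (1 - 2 * \<gamma> l l')"
    if "l \<in> I" "l' \<in> I" for l l'
    using std_normal_moment_exp[OF \<gamma>_lt[OF that], of 0]
      std_normal_distribution_even_moments(1)[of 0]
    by (simp_all add: N_def)
  have expand: "(\<lambda>x. (\<Sum>l\<in>I. c l * exp (\<beta> l * x\<^sup>2))\<^sup>2) =
      (\<lambda>x. \<Sum>l\<in>I. \<Sum>l'\<in>I. c l * c l' * exp (\<gamma> l l' * x\<^sup>2))"
    by (simp add: \<gamma>_def power2_eq_square sum_product exp_add algebra_simps)
  show "integrable std_normal_distribution (\<lambda>x. (\<Sum>l\<in>I. c l * exp (\<beta> l * x\<^sup>2))\<^sup>2)"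
    unfolding expand N_def[symmetric] using exp_moment(1) by auto
  have "(LINT x|N. (\<Sum>l\<in>I. c l * exp (\<beta> l * x\<^sup>2))\<^sup>2) =
      (\<Sum>l\<in>I. \<Sum>l'\<in>I. c l * c l' * (1 / sqrt (1 - 2 * \<gamma> l l')))"
    unfolding expand using exp_moment by (simp add: integrable_sum)
  also have "\<dots> \<le> (\<Sum>l\<in>I. \<Sum>l'\<in>I. \<bar>c l\<bar> * \<bar>c l'\<bar> * 2)"
  proof (intro sum_mono)
    fix l l' assume "l \<in> I" "l' \<in> I"
    have "c l * c l' * (1 / sqrt (1 - 2 * \<gamma> l l')) \<le> \<bar>c l * c l'\<bar> * (1 / sqrt (1 - 2 * \<gamma> l l'))"
      by (rule mult_right_mono) (use \<gamma>_lt[OF \<open>l \<in> I\<close> \<open>l' \<in> I\<close>] in auto)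
    also have "\<dots> \<le> \<bar>c l * c l'\<bar> * 2"
      by (rule mult_left_mono) (use \<gamma>_scale[OF \<open>l \<in> I\<close> \<open>l' \<in> I\<close>] in auto)
    finally show "c l * c l' * (1 / sqrt (1 - 2 * \<gamma> l l')) \<le> \<bar>c l\<bar> * \<bar>c l'\<bar> * 2"
      by (simp add: abs_mult)
  qed
  also have "\<dots> = 2 * (\<Sum>l\<in>I. \<bar>c l\<bar>)\<^sup>2"
    by (simp add: power2_eq_square sum_product sum_distrib_left algebra_simps)
  finally show "(LINT x|std_normal_distribution. (\<Sum>l\<in>I. c l * exp (\<beta> l * x\<^sup>2))\<^sup>2) \<le> 2 * (\<Sum>l\<in>I. \<bar>c l\<bar>)\<^sup>2"
    by (simp add: N_def)
qed

lemma integral_std_normal_pos: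
  fixes f :: "real \<Rightarrow> real"
  assumes "integrable std_normal_distribution f" "\<And>x. f x \<ge> 0" "finite {x. f x = 0}"
  shows "(LINT x|std_normal_distribution. f x) > 0"
proof -
  have "(LINT x|std_normal_distribution. f x) \<noteq> 0"
  proof
    assume "(LINT x|std_normal_distribution. f x) = 0"
    then have "AE x in std_normal_distribution. f x = 0"
      using integral_nonneg_eq_0_iff_AE[OF assms(1)] assms(2) by auto
    then have "AE x in lborel. 0 < std_normal_density x \<longrightarrow> f x = 0"
      by (subst (asm) AE_density) auto
    then have "AE x in lborel. f x = 0"
      by (simp add: normal_density_pos)
    moreover have "AE x in lborel. x \<notin> {x. f x = 0}"
      using assms(3) by (intro AE_not_in finite_imp_null_set_lborel)
    ultimately have "AE x in (lborel :: real measure). False"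
      by eventually_elim simp
    then have "ae_filter lborel = (bot :: real filter)"
      using trivial_limit_def by blast
    then have "emeasure (lborel :: real measure) (space lborel) = 0"
      by (simp add: ae_filter_eq_bot_iff)
    then show False by simp
  qed
  moreover have "(LINT x|std_normal_distribution. f x) \<ge> 0"
    using assms(2) by (simp add: integral_nonneg_AE)
  ultimately show ?thesis by simp
qed

definition lagrange_basis :: "('i \<Rightarrow> 'a::field) \<Rightarrow> 'i set \<Rightarrow> 'i \<Rightarrow> 'a \<Rightarrow> 'a" where
  "lagrange_basis z I l y = (\<Prod>k\<in>I - {l}. (y - z k) / (z l - z k))"

lemma lagrange_basis_at_node:
  assumes "finite I" "inj_on z I" "l \<in> I" "j \<in> I"
  shows "lagrange_basis z I l (z j) = (if l = j then 1 else 0)"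
proof (cases "l = j")
  case True
  have "z l \<noteq> z k" if "k \<in> I - {l}" for k
    using assms that by (auto dest: inj_onD)
  then show ?thesis using True by (simp add: lagrange_basis_def)
next
  case False
  then have "j \<in> I - {l}" using assms by simp
  then show ?thesis
    using False assms(1) unfolding lagrange_basis_def by (auto intro!: prod_zero)
qed

lemma lagrange_basis_poly:
  fixes z :: "'i \<Rightarrow> 'a::field"
  assumes "finite I" "l \<in> I"
  obtains L where "degree L < card I" "\<And>y. poly L y = lagrange_basis z I l y"
proof
  define L where "L = smult (1 / (\<Prod>k\<in>I - {l}. z l - z k)) (\<Prod>k\<in>I - {l}. [:- z k, 1:])"
  show "poly L y = lagrange_basis z I l y" for y
    unfolding L_def lagrange_basis_def by (simp add: poly_prod prod_dividef)
  have "degree L \<le> degree (\<Prod>k\<in>I - {l}. [:- z k, 1:])"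
    unfolding L_def by (rule degree_smult_le)
  also have "\<dots> \<le> (\<Sum>k\<in>I - {l}. degree [:- z k, 1:])"
    using degree_prod_sum_le[of "I - {l}" "\<lambda>k. [:- z k, 1:]"] assms(1) by (simp add: o_def)
  also have "\<dots> = card I - 1"
    using assms by (simp add: card_Diff_singleton)
  also have "\<dots> < card I"
    using assms by (metis card_gt_0_iff diff_less empty_iff zero_less_one)
  finally show "degree L < card I" .
qed

theorem lagrange_interpolation:
  fixes z :: "'i \<Rightarrow> 'a::field" and f :: "'a poly"
  assumes "finite I" "inj_on z I" "degree f < card I"
  shows "(\<Sum>l\<in>I. poly f (z l) * lagrange_basis z I l y) = poly f y"
proof -
  have "\<forall>l\<in>I. \<exists>L. degree L < card I \<and> (\<forall>y. poly L y = lagrange_basis z I l y)"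
    using lagrange_basis_poly[OF assms(1)] by metis
  then obtain L where L: "\<And>l. l \<in> I \<Longrightarrow> degree (L l) < card I"
      "\<And>l y. l \<in> I \<Longrightarrow> poly (L l) y = lagrange_basis z I l y"
    by metis
  define g where "g = (\<Sum>l\<in>I. smult (poly f (z l)) (L l)) - f"
  have "degree g < card I"
    unfolding g_def using assms(3) L(1)
    by (intro degree_diff_less degree_sum_less order.strict_trans1[OF degree_smult_le]) auto
  have g_roots: "poly g (z j) = 0" if "j \<in> I" for j
  proof -
    have "(\<Sum>l\<in>I. poly f (z l) * poly (L l) (z j)) = (\<Sum>l\<in>I. if l = j then poly f (z j) else 0)"
      using that assms(1,2) by (intro sum.cong) (auto simp: L(2) lagrange_basis_at_node)
    then show ?thesis using that assms(1) by (simp add: g_def poly_sum)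
  qed
  have "g = 0"
  proof (rule ccontr)
    assume "g \<noteq> 0"
    have "card I = card (z ` I)" using assms(2) by (simp add: card_image)
    also have "\<dots> \<le> card {x. poly g x = 0}"
      using g_roots \<open>g \<noteq> 0\<close> by (intro card_mono poly_roots_finite) auto
    also have "\<dots> \<le> degree g" using \<open>g \<noteq> 0\<close> by (rule card_poly_roots_bound)
    finally show False using \<open>degree g < card I\<close> by simp
  qed
  then have "poly g y = 0" by simp
  then show ?thesis using L(2) by (simp add: g_def poly_sum)
qed

corollary sum_lagrange_basis_power:
  fixes z :: "'i \<Rightarrow> 'a::field"
  assumes "finite I" "inj_on z I" "i < card I"
  shows "(\<Sum>l\<in>I. z l ^ i * lagrange_basis z I l y) = y ^ i"
  using lagrange_interpolation[OF assms(1,2), of "monom 1 i" y] assms(3)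
  by (simp add: poly_monom degree_monom_eq)

lemma power_div_fact_le_exp:
  fixes x :: real
  assumes "x \<ge> 0"
  shows "x ^ n / fact n \<le> exp x"
proof -
  have "(\<Sum>k\<in>{n}. x ^ k / fact k) \<le> (\<Sum>k. x ^ k / fact k)"
    using assms summable_exp[of x] by (intro sum_le_suminf) (auto simp: inverse_eq_divide)
  then show ?thesis by (simp add: exp_def inverse_eq_divide)
qed

lemma power_self_le_fact: "real n ^ n \<le> 3 ^ n * fact n"
proof -
  have "real n ^ n \<le> exp (real n) * fact n"
    using power_div_fact_le_exp[of "real n" n] by (simp add: divide_le_eq)
  also have "exp (real n) = exp 1 ^ n" by (simp flip: exp_of_nat_mult)
  also have "\<dots> \<le> 3 ^ n" by (intro power_mono exp_le) auto
  finally show ?thesis by (simp add: mult_right_mono)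
qed

lemma prod_abs_diff_nat:
  assumes "l \<le> n"
  shows "(\<Prod>k\<in>{0..n} - {l}. \<bar>real l - real k\<bar>) = fact l * fact (n - l)"
proof -
  have split: "{0..n} - {l} = {0..<l} \<union> (\<lambda>j. j + l) ` {1..n - l}"
    using assms by auto
  have "(\<Prod>k\<in>{0..<l}. \<bar>real l - real k\<bar>) = real (\<Prod>k\<in>{0..<l}. l - k)"
    by simp
  also have "\<dots> = fact l" by (simp add: fact_prod_rev)
  finally have below: "(\<Prod>k\<in>{0..<l}. \<bar>real l - real k\<bar>) = fact l" .
  have above: "(\<Prod>k\<in>(\<lambda>j. j + l) ` {1..n - l}. \<bar>real l - real k\<bar>) = fact (n - l)"
    by (subst prod.reindex) (auto simp: fact_prod)
  have "(\<Prod>k\<in>{0..n} - {l}. \<bar>real l - real k\<bar>) =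
      (\<Prod>k\<in>{0..<l}. \<bar>real l - real k\<bar>) * (\<Prod>k\<in>(\<lambda>j. j + l) ` {1..n - l}. \<bar>real l - real k\<bar>)"
    unfolding split by (rule prod.union_disjoint) auto
  then show ?thesis by (simp only: below above)
qed

lemma double_Suc_power_le_fact_mult_fact:
  assumes "l \<le> n"
  shows "real (2 * (n + 1)) ^ n \<le> 24 ^ n * (fact l * fact (n - l))"
proof -
  have "real (2 * (n + 1)) ^ n \<le> (4 * real n) ^ n"
  proof (cases "n = 0")
    case False
    then have "real (2 * (n + 1)) \<le> 4 * real n" by simp
    then show ?thesis by (rule power_mono) simp
  qed simp
  also have "\<dots> \<le> 4 ^ n * (3 ^ n * fact n)"
    using power_self_le_fact[of n] by (simp add: power_mult_distrib)
  also have "fact n = fact l * fact (n - l) * real (n choose l)"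
    using binomial_fact_lemma[OF assms] by (metis of_nat_fact of_nat_mult)
  also have "real (n choose l) \<le> 2 ^ n"
    using binomial_le_pow2[of n l] by (metis of_nat_le_iff of_nat_numeral of_nat_power)
  then have "4 ^ n * (3 ^ n * (fact l * fact (n - l) * real (n choose l))) \<le>
      4 ^ n * (3 ^ n * (fact l * fact (n - l) * 2 ^ n))"
    by (intro mult_left_mono) auto
  also have "\<dots> = 24 ^ n * (fact l * fact (n - l))"
    by (simp add: power_mult_distrib[symmetric] algebra_simps)
  finally show ?thesis .
qed

definition gauss_test :: "('i \<Rightarrow> real) \<Rightarrow> 'i set \<Rightarrow> nat \<Rightarrow> real \<Rightarrow> real" where
  "gauss_test z I t x =
     (\<Sum>l\<in>I. lagrange_basis z I l 1 / z l ^ (t + 1) * exp ((1 - 1 / (z l)\<^sup>2) / 2 * x\<^sup>2))"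

lemma integral_gauss_test_moment:
  fixes p :: "real poly" and z :: "'i \<Rightarrow> real"
  assumes "finite I" "inj_on z I" "\<And>l. l \<in> I \<Longrightarrow> z l > 0" "degree p < card I"
  shows "integrable std_normal_distribution (\<lambda>x. x^t * poly p x * gauss_test z I t x)"
    and "(LINT x|std_normal_distribution. x^t * poly p x * gauss_test z I t x) =
         (LINT x|std_normal_distribution. x^t * poly p x)"
proof -
  define N where "N = std_normal_distribution"
  define M where "M n = (LINT x|N. x^n)" for n
  define \<beta> where "\<beta> l = (1 - 1 / (z l)\<^sup>2) / 2" for l
  define d where "d l = lagrange_basis z I l 1" for l
  have \<beta>_lt: "\<beta> l < 1/2" if "l \<in> I" for l
    using assms(3)[OF that] by (simp add: \<beta>_def)
  have \<beta>_scale: "1 / sqrt (1 - 2 * \<beta> l) = z l" if "l \<in> I" for l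
  proof -
    have "1 - 2 * \<beta> l = (1 / z l)\<^sup>2" by (simp add: \<beta>_def power_divide diff_divide_distrib)
    then show ?thesis using assms(3)[OF that] by simp
  qed
  have expand: "(\<lambda>x. x^t * poly p x * gauss_test z I t x) =
      (\<lambda>x. \<Sum>l\<in>I. d l / z l ^ (t + 1) * (x^t * poly p x * exp (\<beta> l * x\<^sup>2)))"
    by (simp add: gauss_test_def d_def \<beta>_def sum_distrib_left algebra_simps)
  show "integrable std_normal_distribution (\<lambda>x. x^t * poly p x * gauss_test z I t x)"
    unfolding expand using std_normal_poly_moment_exp(1)[OF \<beta>_lt] by auto
  have "(LINT x|N. x^t * poly p x * gauss_test z I t x) =
      (\<Sum>l\<in>I. d l / z l ^ (t + 1) * (\<Sum>i\<le>degree p. coeff p i * z l ^ (t + i + 1) * M (t + i)))"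
    unfolding expand N_def M_def using std_normal_poly_moment_exp[OF \<beta>_lt]
    by (simp add: \<beta>_scale)
  also have "\<dots> = (\<Sum>l\<in>I. \<Sum>i\<le>degree p. coeff p i * M (t + i) * (z l ^ i * d l))"
  proof (intro sum.cong refl, unfold sum_distrib_left, intro sum.cong refl)
    fix l i assume "l \<in> I"
    then show "d l / z l ^ (t + 1) * (coeff p i * z l ^ (t + i + 1) * M (t + i)) =
        coeff p i * M (t + i) * (z l ^ i * d l)"
      using assms(3)[OF \<open>l \<in> I\<close>] by (simp add: power_add field_simps)
  qed
  also have "\<dots> = (\<Sum>i\<le>degree p. coeff p i * M (t + i) * (\<Sum>l\<in>I. z l ^ i * d l))"
    by (subst sum.swap) (simp add: sum_distrib_left)
  also have "\<dots> = (\<Sum>i\<le>degree p. coeff p i * 1 ^ (t + i + 1) * M (t + i))"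
    using assms(4) by (simp add: d_def sum_lagrange_basis_power[OF assms(1,2)])
  also have "\<dots> = (LINT x|N. x^t * poly p x)"
    using std_normal_poly_moment_exp(2)[of 0 t p] by (simp add: N_def M_def)
  finally show "(LINT x|std_normal_distribution. x^t * poly p x * gauss_test z I t x) =
         (LINT x|std_normal_distribution. x^t * poly p x)"
    by (simp add: N_def)
qed

definition gauss_node :: "nat \<Rightarrow> nat \<Rightarrow> real" where
  "gauss_node D l = 1 + real (D + 1 + l) / (10 * real (D + 1))"

lemma gauss_node_ge: "gauss_node D l \<ge> 11/10"
  by (simp add: gauss_node_def field_simps)

lemma gauss_node_le: "l \<le> D \<Longrightarrow> gauss_node D l \<le> 6/5"
  by (simp add: gauss_node_def field_simps)

lemma inj_gauss_node: "inj (gauss_node D)"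
  by (rule injI) (simp add: gauss_node_def field_simps)

lemma lagrange_basis_gauss_node_le:
  assumes "l \<le> D"
  shows "\<bar>lagrange_basis (gauss_node D) {0..D} l 1\<bar> \<le> 24 ^ D"
proof -
  have node_diff: "gauss_node D j - gauss_node D k = (real j - real k) / (10 * real (D + 1))" for j k
    by (simp add: gauss_node_def diff_divide_distrib add_divide_distrib)
  have "\<bar>lagrange_basis (gauss_node D) {0..D} l 1\<bar> =
      (\<Prod>k\<in>{0..D} - {l}. real (D + 1 + k) / \<bar>real l - real k\<bar>)"
    unfolding lagrange_basis_def abs_prod
  proof (intro prod.cong refl)
    fix k
    have "1 - gauss_node D k = - (real (D + 1 + k) / (10 * real (D + 1)))"
      by (simp add: gauss_node_def)
    then show "\<bar>(1 - gauss_node D k) / (gauss_node D l - gauss_node D k)\<bar> =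
        real (D + 1 + k) / \<bar>real l - real k\<bar>"
      by (simp add: node_diff)
  qed
  also have "\<dots> \<le> (\<Prod>k\<in>{0..D} - {l}. real (2 * (D + 1)) / \<bar>real l - real k\<bar>)"
    by (intro prod_mono conjI divide_right_mono) auto
  also have "\<dots> = real (2 * (D + 1)) ^ D / (fact l * fact (D - l))"
    using assms by (simp add: prod_dividef prod_abs_diff_nat)
  also have "\<dots> \<le> 24 ^ D"
    using double_Suc_power_le_fact_mult_fact[OF assms] by (simp add: divide_le_eq)
  finally show ?thesis .
qed

lemma two_powr_div_8_le: "2 powr (real t / 8) \<le> (121/100 :: real) ^ t"
proof -
  have "2 powr (1/8 :: real) \<le> 121/100"
  proof -
    have "(2 :: real) \<le> (121/100) ^ 8" by (simp add: power_divide)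
    then have "2 powr (1/8 :: real) \<le> ((121/100) ^ 8) powr (1/8)"
      by (intro powr_mono2) auto
    also have "((121/100 :: real) ^ 8) powr (1/8) = ((121/100) powr real 8) powr (1/8)"
      by (subst powr_realpow) auto
    also have "\<dots> = (121/100) powr (real 8 * (1/8))"
      by (rule powr_powr)
    also have "\<dots> = 121/100"
      by simp
    finally show ?thesis .
  qed
  then have "(2 powr (1/8 :: real)) ^ t \<le> (121/100) ^ t"
    by (intro power_mono) auto
  moreover have "(2 powr (1/8 :: real)) ^ t = 2 powr (real t / 8)"
    by (subst powr_realpow[symmetric]) (simp_all add: powr_powr)
  ultimately show ?thesis by simp
qed

lemma gauss_test_constant_le:
  "2 * (real (D + 1) * 24 ^ D)\<^sup>2 * (100/121) ^ t \<le> 2 powr (13 * (real D + 1) - real t / 8)"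
proof -
  have "real (D + 1) \<le> 2 ^ D"
    using Suc_leI[OF less_exp[of D]] by (metis Suc_eq_plus1 of_nat_le_iff of_nat_numeral of_nat_power)
  then have "real (D + 1) * 24 ^ D \<le> 2 ^ D * 24 ^ D"
    by (rule mult_right_mono) simp
  also have "\<dots> \<le> 2 ^ (6 * D)"
    by (simp add: power_mult flip: power_mult_distrib) (intro power_mono, auto)
  finally have "2 * (real (D + 1) * 24 ^ D)\<^sup>2 \<le> 2 * (2 ^ (6 * D))\<^sup>2"
    by (intro mult_left_mono power_mono) auto
  also have "\<dots> = 2 ^ (12 * D + 1)"
    by (simp add: power_mult[symmetric] mult.commute)
  also have "\<dots> \<le> (2 :: real) ^ (13 * (D + 1))"
    by (rule power_increasing) auto
  also have "\<dots> = 2 powr (13 * (real D + 1))"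
    by (subst powr_realpow[symmetric]) (auto simp: add.commute)
  finally have prefactor: "2 * (real (D + 1) * 24 ^ D)\<^sup>2 \<le> 2 powr (13 * (real D + 1))" .
  have "2 * (real (D + 1) * 24 ^ D)\<^sup>2 * (100/121) ^ t = 2 * (real (D + 1) * 24 ^ D)\<^sup>2 / (121/100) ^ t"
    by (simp add: power_divide)
  also have "\<dots> \<le> 2 powr (13 * (real D + 1)) / 2 powr (real t / 8)"
    using prefactor two_powr_div_8_le[of t] by (intro frac_le) auto
  also have "\<dots> = 2 powr (13 * (real D + 1) - real t / 8)"
    by (simp add: powr_diff)
  finally show ?thesis .
qed

lemma integral_gauss_test_square_le:
  fixes D t :: nat
  defines "v \<equiv> gauss_test (gauss_node D) {0..D} t"
  shows "integrable std_normal_distribution (\<lambda>x. (v x)\<^sup>2)"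
    and "(LINT x|std_normal_distribution. (v x)\<^sup>2) \<le> 2 powr (13 * (real D + 1) - real t / 8)"
proof -
  define z where "z = gauss_node D"
  define c where "c l = lagrange_basis z {0..D} l 1 / z l ^ (t + 1)" for l
  define \<beta> where "\<beta> l = (1 - 1 / (z l)\<^sup>2) / 2" for l
  have v_eq: "v = (\<lambda>x. \<Sum>l\<in>{0..D}. c l * exp (\<beta> l * x\<^sup>2))"
    by (simp add: v_def gauss_test_def z_def c_def \<beta>_def fun_eq_iff)
  have z_pos: "z l > 0" for l
    using gauss_node_ge[of D l] by (simp add: z_def)
  have "\<beta> l \<le> 3/16" if "l \<in> {0..D}" for l
  proof -
    have "(z l)\<^sup>2 \<le> (6/5)\<^sup>2"
      using gauss_node_le[of l D] that z_pos[of l] by (intro power_mono) (auto simp: z_def)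
    then show ?thesis using z_pos[of l] by (simp add: \<beta>_def field_simps)
  qed
  note square_le = integral_std_normal_exp_sum_square_le[of "{0..D}" \<beta> c, OF finite_atLeastAtMost this]
  show "integrable std_normal_distribution (\<lambda>x. (v x)\<^sup>2)"
    unfolding v_eq by (rule square_le(1))
  have c_le: "\<bar>c l\<bar> \<le> 24 ^ D * (10/11) ^ t" if "l \<in> {0..D}" for l
  proof -
    have "(11/10) ^ t \<le> z l ^ t"
      using gauss_node_ge[of D l] by (intro power_mono) (auto simp: z_def)
    also have "\<dots> \<le> z l ^ (t + 1)"
      using gauss_node_ge[of D l] by (intro power_increasing) (auto simp: z_def)
    finally have "(11/10) ^ t \<le> z l ^ (t + 1)" .
    moreover have "\<bar>lagrange_basis z {0..D} l 1\<bar> \<le> 24 ^ D"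
      using lagrange_basis_gauss_node_le[of l D] that by (simp add: z_def)
    ultimately have "\<bar>c l\<bar> \<le> 24 ^ D / (11/10) ^ t"
      using z_pos[of l] by (simp add: c_def frac_le)
    then show ?thesis by (simp add: power_divide)
  qed
  have "(\<Sum>l\<in>{0..D}. \<bar>c l\<bar>)\<^sup>2 \<le> (\<Sum>l\<in>{0..D}. 24 ^ D * (10/11) ^ t)\<^sup>2"
    using c_le by (intro power_mono sum_mono sum_nonneg) auto
  also have "\<dots> = (real (D + 1) * 24 ^ D)\<^sup>2 * (100/121) ^ t"
    by (simp add: power_mult_distrib power2_eq_square flip: power_mult_distrib)
  finally show "(LINT x|std_normal_distribution. (v x)\<^sup>2) \<le> 2 powr (13 * (real D + 1) - real t / 8)"
    using square_le(2) gauss_test_constant_le[of D t] unfolding v_eq by simp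
qed

theorem std_normal_moment_ratio_ge:
  fixes p :: "real poly"
  assumes "even t" "p \<noteq> 0" "\<And>x. poly p x \<ge> 0"
  shows "(LINT x|std_normal_distribution. x^(2*t) * (poly p x)\<^sup>2) /
           (LINT x|std_normal_distribution. x^t * poly p x)\<^sup>2
         \<ge> 2 powr (real t / 8 - 13 * (real (degree p) + 1))"
proof -
  define N where "N = std_normal_distribution"
  define D where "D = degree p"
  define q where "q x = x^t * poly p x" for x
  define v where "v = gauss_test (gauss_node D) {0..D} t"
  define A where "A = (LINT x|N. q x)"
  note moment = integral_gauss_test_moment[of "{0..D}" "gauss_node D" p t]
  have node_pos: "gauss_node D l > 0" for l
    using gauss_node_ge[of D l] by simp
  have q_square: "(q x)\<^sup>2 = x^(2*t) * poly (p * p) x * exp (0 * x\<^sup>2)" for x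
    by (simp add: q_def power_mult_distrib power_mult power2_eq_square)
  have q_square_int: "integrable N (\<lambda>x. (q x)\<^sup>2)"
    unfolding q_square N_def by (rule std_normal_poly_moment_exp(1)) simp
  have "A = (LINT x|N. q x * v x)"
    using moment(2) inj_on_subset[OF inj_gauss_node] node_pos
    by (simp add: A_def N_def q_def v_def D_def)
  also have "\<dots>\<^sup>2 \<le> (LINT x|N. (q x)\<^sup>2) * (LINT x|N. (v x)\<^sup>2)"
    using moment(1) integral_gauss_test_square_le(1) q_square_int inj_on_subset[OF inj_gauss_node] node_pos
    by (intro Cauchy_Schwarz_integral) (simp_all add: N_def q_def v_def D_def)
  also have "\<dots> \<le> (LINT x|N. (q x)\<^sup>2) * 2 powr (13 * (real D + 1) - real t / 8)"
    using integral_gauss_test_square_le(2)[of D t]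
    by (intro mult_left_mono integral_nonneg_AE) (simp_all add: N_def v_def)
  finally have "A\<^sup>2 \<le> (LINT x|N. (q x)\<^sup>2) * 2 powr (13 * (real D + 1) - real t / 8)" .
  moreover have "A > 0"
    unfolding A_def N_def
  proof (rule integral_std_normal_pos)
    show "integrable std_normal_distribution q"
      using std_normal_poly_moment_exp(1)[of 0 t p] by (simp add: q_def[abs_def])
    show "q x \<ge> 0" for x
      using assms(1,3) by (simp add: q_def zero_le_even_power)
    have "{x. q x = 0} \<subseteq> insert 0 {x. poly p x = 0}"
      by (auto simp: q_def)
    then show "finite {x. q x = 0}"
      using poly_roots_finite[OF assms(2)] by (auto intro: finite_subset)
  qed
  ultimately have "1 / 2 powr (13 * (real D + 1) - real t / 8) \<le> (LINT x|N. (q x)\<^sup>2) / A\<^sup>2"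
    by (simp add: field_simps)
  then show ?thesis
    by (simp add: N_def A_def q_def D_def power_mult_distrib power_even_eq flip: powr_minus_divide)
qed

theorem mainTheorem8:
  shows "\<exists>c C :: real. c > 0 \<and> C > 0 \<and>
    (\<forall>(k'::nat) (\<mu>::nat \<Rightarrow> real) (t::nat).
       even t \<longrightarrow>
       (let p = (\<lambda>x::real. \<Prod>i\<in>{1..k'}. (x - \<mu> i)^2) in
         (LINT x|std_normal_distribution. x^(2*t) * (p x)^2)
           / (LINT x|std_normal_distribution. x^t * p x)^2
         \<ge> 2 powr (c * real t - C * (real k' + 1))))"
proof (rule exI[of _ "1/8"], rule exI[of _ 26], intro conjI allI impI)
  fix k' :: nat and \<mu> :: "nat \<Rightarrow> real" and t :: nat
  assume "even t"
  define P where "P = (\<Prod>i\<in>{1..k'}. [:- \<mu> i, 1:] ^ 2)"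
  have poly_P: "poly P x = (\<Prod>i\<in>{1..k'}. (x - \<mu> i)^2)" for x
    by (simp add: P_def poly_prod)
  have "degree P \<le> 2 * k'"
    using degree_prod_sum_le[of "{1..k'}" "\<lambda>i. [:- \<mu> i, 1:] ^ 2"]
    by (simp add: P_def degree_linear_power o_def)
  then have "2 powr (1/8 * real t - 26 * (real k' + 1)) \<le> 2 powr (real t / 8 - 13 * (real (degree P) + 1))"
    by (intro powr_mono) auto
  also have "\<dots> \<le> (LINT x|std_normal_distribution. x^(2*t) * (poly P x)\<^sup>2) /
                  (LINT x|std_normal_distribution. x^t * poly P x)\<^sup>2"
  proof (rule std_normal_moment_ratio_ge)
    show "P \<noteq> 0" by (simp add: P_def)
    show "poly P x \<ge> 0" for x by (simp add: poly_P prod_nonneg)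
  qed fact
  finally show "let p = (\<lambda>x::real. \<Prod>i\<in>{1..k'}. (x - \<mu> i)^2) in
         (LINT x|std_normal_distribution. x^(2*t) * (p x)^2)
           / (LINT x|std_normal_distribution. x^t * p x)^2
         \<ge> 2 powr (1/8 * real t - 26 * (real k' + 1))"
    by (simp add: poly_P)
qed simp_all

end
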